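(* Let $M\in\mathbb{R}^{d\times d}$ satisfy $\|M\|\le1$. Then for every $u\in\mathbb{C}^d$ with $\|u\|\le1$ and every integer $n\ge1$, $$\|M^nu\|^2-\|M^{n+1}u\|^2\le\frac{\operatorname{rank}(M)}{n}\le\frac dn.$$
   Context: $\|\cdot\|$ denotes the Euclidean norm for vectors and the spectral norm for matrices. *)

theory Defs
  imports "HOL-Analysis.Analysis"
begin

text \<open>Matrix power (matrix product iterated; note: the type-class power on vec is componentwise).\<close>
primrec matpow :: "'a::semiring_1^'n^'n \<Rightarrow> nat \<Rightarrow> 'a^'n^'n" where
  "matpow A 0 = mat 1"
| "matpow A (Suc k) = A ** matpow A k"

definition cmat :: "real^'n^'m \<Rightarrow> complex^'n^'m" where
  "cmat A = (\<chi> i j. complex_of_real (A $ i $ j))"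

definition spec_norm :: "real^'n^'m \<Rightarrow> real" where
  "spec_norm A = onorm (\<lambda>x. A *v x)"

end

theory Submission
  imports Defs
begin

text \<open>
  Write D_j(x) = |M^j x|^2 - |M^(j+1) x|^2; as M is a contraction, D_j is a positive semidefinite
  quadratic form. For j < n we have D_n(x) = D_j(M^(n-j) x) with M^(n-j) x in the range of M, so
  D_n(x) is at most |x|^2 times the trace of D_j on that range, computed in an orthonormal basis B.
  Summing over j < n telescopes: n D_n(x) \<le> |x|^2 \<Sum>_(b \<in> B) (|b|^2 - |M^n b|^2) \<le> |x|^2 rank M.
  A complex vector is handled by splitting it into its real and imaginary parts.
\<close>

lemma norm_sq_gap_sum_le:
  fixes f g :: "'a::real_inner \<Rightarrow> 'b::real_inner"
  assumes lf: "linear f" and lg: "linear g" and le: "\<And>x. norm (g x) \<le> norm (f x)"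
    and "finite B"
  shows "(norm (f (\<Sum>b\<in>B. c b *\<^sub>R b)))\<^sup>2 - (norm (g (\<Sum>b\<in>B. c b *\<^sub>R b)))\<^sup>2
     \<le> (\<Sum>b\<in>B. (c b)\<^sup>2) * (\<Sum>b\<in>B. (norm (f b))\<^sup>2 - (norm (g b))\<^sup>2)"
proof -
  define \<beta> where "\<beta> x y = f x \<bullet> f y - g x \<bullet> g y" for x y
  have \<beta>_diag: "(norm (f x))\<^sup>2 - (norm (g x))\<^sup>2 = \<beta> x x" for x
    by (simp add: \<beta>_def power2_norm_eq_inner)
  have \<beta>_nonneg: "\<beta> x x \<ge> 0" for x
    using power_mono[OF le[of x] norm_ge_zero, of 2] \<beta>_diag[of x] by linarith
  have \<beta>_sum: "\<beta> (\<Sum>b\<in>B. c b *\<^sub>R b) (\<Sum>b\<in>B. c b *\<^sub>R b) = (\<Sum>a\<in>B. \<Sum>b\<in>B. c a * c b * \<beta> a b)"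
    by (simp add: \<beta>_def linear_sum[OF lf] linear_sum[OF lg] linear_cmul[OF lf] linear_cmul[OF lg]
        inner_sum_left inner_sum_right sum_subtractf[symmetric] sum_distrib_left inner_commute algebra_simps)
  \<comment> \<open>AM-GM for the semidefinite form, from \<open>\<beta> v v \<ge> 0\<close> at \<open>v = c b a - c a b\<close>.\<close>
  have cross: "c a * c b * \<beta> a b \<le> ((c b)\<^sup>2 * \<beta> a a + (c a)\<^sup>2 * \<beta> b b) / 2" for a b
  proof -
    have "\<beta> (c b *\<^sub>R a - c a *\<^sub>R b) (c b *\<^sub>R a - c a *\<^sub>R b)
       = (c b)\<^sup>2 * \<beta> a a - 2 * (c a * c b * \<beta> a b) + (c a)\<^sup>2 * \<beta> b b"
      by (simp add: \<beta>_def linear_diff[OF lf] linear_diff[OF lg] linear_cmul[OF lf] linear_cmul[OF lg]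
          inner_diff_left inner_diff_right power2_eq_square inner_commute algebra_simps)
    with \<beta>_nonneg[of "c b *\<^sub>R a - c a *\<^sub>R b"] show ?thesis by (simp add: field_simps)
  qed
  have "(\<Sum>a\<in>B. \<Sum>b\<in>B. c a * c b * \<beta> a b) \<le> (\<Sum>a\<in>B. \<Sum>b\<in>B. ((c b)\<^sup>2 * \<beta> a a + (c a)\<^sup>2 * \<beta> b b) / 2)"
    by (intro sum_mono cross)
  also have "\<dots> = ((\<Sum>a\<in>B. \<Sum>b\<in>B. (c b)\<^sup>2 * \<beta> a a) + (\<Sum>a\<in>B. \<Sum>b\<in>B. (c a)\<^sup>2 * \<beta> b b)) / 2"
    by (simp add: sum.distrib add_divide_distrib sum_divide_distrib[symmetric])
  also have "(\<Sum>a\<in>B. \<Sum>b\<in>B. (c b)\<^sup>2 * \<beta> a a) = (\<Sum>b\<in>B. (c b)\<^sup>2) * (\<Sum>b\<in>B. \<beta> b b)"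
    by (subst sum.swap) (simp add: sum_product)
  also have "(\<Sum>a\<in>B. \<Sum>b\<in>B. (c a)\<^sup>2 * \<beta> b b) = (\<Sum>b\<in>B. (c b)\<^sup>2) * (\<Sum>b\<in>B. \<beta> b b)"
    by (simp add: sum_product)
  finally show ?thesis using \<beta>_diag \<beta>_sum by (simp add: mult.commute)
qed

lemma orthonormal_sum_inner_sq:
  assumes "pairwise orthogonal B" and "\<And>b. b \<in> B \<Longrightarrow> norm b = 1"
    and "y \<in> span B" and "finite B"
  shows "(\<Sum>b\<in>B. (y \<bullet> b)\<^sup>2) = (norm y)\<^sup>2"
proof -
  have "(norm y)\<^sup>2 = y \<bullet> (\<Sum>b\<in>B. (y \<bullet> b) *\<^sub>R b)"
    using orthonormal_basis_expand[OF assms] by (simp add: power2_norm_eq_inner)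
  also have "\<dots> = (\<Sum>b\<in>B. (y \<bullet> b)\<^sup>2)"
    by (simp add: inner_sum_right power2_eq_square)
  finally show ?thesis by simp
qed

lemma norm_sq_gap_le_trace:
  fixes f g :: "'a::real_inner \<Rightarrow> 'b::real_inner"
  assumes "linear f" and "linear g" and "\<And>x. norm (g x) \<le> norm (f x)"
    and B: "pairwise orthogonal B" "\<And>b. b \<in> B \<Longrightarrow> norm b = 1" "finite B"
    and "y \<in> span B"
  shows "(norm (f y))\<^sup>2 - (norm (g y))\<^sup>2 \<le> (norm y)\<^sup>2 * (\<Sum>b\<in>B. (norm (f b))\<^sup>2 - (norm (g b))\<^sup>2)"
  using norm_sq_gap_sum_le[OF assms(1-3) \<open>finite B\<close>, of "\<lambda>b. y \<bullet> b"]
  by (simp add: orthonormal_basis_expand[OF B(1,2) \<open>y \<in> span B\<close> B(3)]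
      orthonormal_sum_inner_sq[OF B(1,2) \<open>y \<in> span B\<close> B(3)])

lemma matpow_Suc_mult_vec: "matpow M (Suc k) *v x = M *v (matpow M k *v x)"
  by (simp add: matrix_vector_mul_assoc[symmetric])

lemma matpow_add_mult_vec: "matpow M (j + k) *v x = matpow M j *v (matpow M k *v x)"
  by (induction j) (simp_all add: matrix_vector_mul_assoc[symmetric])

lemma norm_mult_vec_le_if_spec_norm_le_1:
  assumes "spec_norm M \<le> 1"
  shows "norm (M *v x) \<le> norm x"
proof -
  have "norm (M *v x) \<le> spec_norm M * norm x"
    unfolding spec_norm_def by (rule onorm) (simp add: linear_linear)
  also have "\<dots> \<le> norm x"
    using assms mult_right_mono[OF assms norm_ge_zero] by simp
  finally show ?thesis .
qed

lemma norm_matpow_mult_vec_le: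
  assumes "spec_norm M \<le> 1"
  shows "norm (matpow M k *v x) \<le> norm x"
  by (induction k) (auto simp: matpow_Suc_mult_vec simp del: matpow.simps(2)
      intro: order_trans[OF norm_mult_vec_le_if_spec_norm_le_1[OF assms]])

definition norm_drop :: "real^'n^'n \<Rightarrow> nat \<Rightarrow> real^'n \<Rightarrow> real" where
  "norm_drop M j x = (norm (matpow M j *v x))\<^sup>2 - (norm (matpow M (Suc j) *v x))\<^sup>2"

lemma norm_drop_nonneg:
  assumes "spec_norm M \<le> 1"
  shows "norm_drop M j x \<ge> 0"
  using power_mono[OF norm_mult_vec_le_if_spec_norm_le_1[OF assms, of "matpow M j *v x"], of 2]
  by (simp add: norm_drop_def matpow_Suc_mult_vec del: matpow.simps(2))

lemma sum_norm_drop_telescope: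
  "(\<Sum>j<n. norm_drop M j x) = (norm x)\<^sup>2 - (norm (matpow M n *v x))\<^sup>2"
  unfolding norm_drop_def by (subst sum_lessThan_telescope') simp

lemma norm_drop_shift:
  assumes "j \<le> n"
  shows "norm_drop M n x = norm_drop M j (matpow M (n - j) *v x)"
  using assms matpow_add_mult_vec[of M j "n - j" x] matpow_add_mult_vec[of M "Suc j" "n - j" x]
  by (simp add: norm_drop_def)

lemma norm_drop_le_trace:
  assumes M: "spec_norm M \<le> 1" and "j < n"
    and B: "pairwise orthogonal B" "\<And>b. b \<in> B \<Longrightarrow> norm b = 1" "finite B"
    and span_B: "span B = range ((*v) M)"
  shows "norm_drop M n x \<le> (norm x)\<^sup>2 * (\<Sum>b\<in>B. norm_drop M j b)"
proof -
  define y where "y = matpow M (n - j) *v x"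
  have "y = M *v (matpow M (n - j - 1) *v x)"
    using \<open>j < n\<close> matpow_Suc_mult_vec[of M "n - j - 1" x] by (simp add: y_def Suc_diff_Suc)
  then have "y \<in> span B"
    using span_B by simp
  have "norm_drop M n x = norm_drop M j y"
    using \<open>j < n\<close> by (simp add: y_def norm_drop_shift)
  also have "\<dots> \<le> (norm y)\<^sup>2 * (\<Sum>b\<in>B. norm_drop M j b)"
    unfolding norm_drop_def
    by (rule norm_sq_gap_le_trace[OF matrix_vector_mul_linear matrix_vector_mul_linear _ B \<open>y \<in> span B\<close>])
       (simp add: matpow_Suc_mult_vec norm_mult_vec_le_if_spec_norm_le_1[OF M] del: matpow.simps(2))
  also have "\<dots> \<le> (norm x)\<^sup>2 * (\<Sum>b\<in>B. norm_drop M j b)"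
    using norm_matpow_mult_vec_le[OF M]
    by (intro mult_right_mono power_mono sum_nonneg norm_drop_nonneg[OF M]) (simp_all add: y_def)
  finally show ?thesis .
qed

lemma norm_drop_le_rank:
  fixes M :: "real^'n^'n"
  assumes M: "spec_norm M \<le> 1"
  shows "real n * norm_drop M n x \<le> real (rank M) * (norm x)\<^sup>2"
proof -
  obtain B where B: "pairwise orthogonal B" "\<And>b. b \<in> B \<Longrightarrow> norm b = 1"
    and "independent B" "card B = dim (range ((*v) M))" "span B = range ((*v) M)"
    using orthonormal_basis_subspace[OF subspace_UNIV[THEN linear_subspace_image[OF matrix_vector_mul_linear]]]
    by metis
  have "finite B"
    using \<open>independent B\<close> by (rule independent_imp_finite)
  have "real n * norm_drop M n x = (\<Sum>j<n. norm_drop M n x)"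
    by simp
  also have "\<dots> \<le> (\<Sum>j<n. (norm x)\<^sup>2 * (\<Sum>b\<in>B. norm_drop M j b))"
    by (intro sum_mono norm_drop_le_trace[OF M _ B \<open>finite B\<close> \<open>span B = _\<close>]) simp
  also have "\<dots> = (norm x)\<^sup>2 * (\<Sum>b\<in>B. (norm b)\<^sup>2 - (norm (matpow M n *v b))\<^sup>2)"
    by (simp add: sum_distrib_left[symmetric] sum.swap[of _ B] sum_norm_drop_telescope)
  also have "\<dots> \<le> (norm x)\<^sup>2 * (\<Sum>b\<in>B. 1)"
    by (intro mult_left_mono sum_mono) (simp_all add: B(2))
  also have "\<dots> = real (rank M) * (norm x)\<^sup>2"
    using \<open>card B = _\<close> by (simp add: rank_dim_range)
  finally show ?thesis .
qed

lemma norm_complex_vec_sq: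
  fixes w :: "complex^'n"
  shows "(norm w)\<^sup>2 = (norm (\<chi> i. Re (w$i)))\<^sup>2 + (norm (\<chi> i. Im (w$i)))\<^sup>2"
  unfolding power2_norm_eq_inner inner_vec_def
  by (simp add: inner_complex_def power2_eq_square sum.distrib)

lemma norm_cmat_mult_vec_sq:
  fixes A :: "real^'n^'m" and u :: "complex^'n"
  shows "(norm (cmat A *v u))\<^sup>2 = (norm (A *v (\<chi> i. Re (u$i))))\<^sup>2 + (norm (A *v (\<chi> i. Im (u$i))))\<^sup>2"
proof -
  have "(\<chi> i. Re ((cmat A *v u)$i)) = A *v (\<chi> i. Re (u$i))"
       "(\<chi> i. Im ((cmat A *v u)$i)) = A *v (\<chi> i. Im (u$i))"
    by (simp_all add: vec_eq_iff matrix_vector_mult_def cmat_def Re_sum Im_sum)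
  then show ?thesis
    by (simp add: norm_complex_vec_sq)
qed

theorem mainTheorem15:
  fixes M :: "real^'d^'d" and u :: "complex^'d" and n :: nat
  assumes "spec_norm M \<le> 1" and "norm u \<le> 1" and "n \<ge> 1"
  shows "(norm (cmat (matpow M n) *v u))\<^sup>2 - (norm (cmat (matpow M (Suc n)) *v u))\<^sup>2
           \<le> real (rank M) / real n
       \<and> real (rank M) / real n \<le> real CARD('d) / real n"
proof
  define a :: "real^'d" where "a = (\<chi> i. Re (u$i))"
  define b :: "real^'d" where "b = (\<chi> i. Im (u$i))"
  have "real n * ((norm (cmat (matpow M n) *v u))\<^sup>2 - (norm (cmat (matpow M (Suc n)) *v u))\<^sup>2)
      = real n * norm_drop M n a + real n * norm_drop M n b"
    by (simp add: norm_cmat_mult_vec_sq norm_drop_def a_def b_def algebra_simps)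
  also have "\<dots> \<le> real (rank M) * ((norm a)\<^sup>2 + (norm b)\<^sup>2)"
    using norm_drop_le_rank[OF assms(1), of n a] norm_drop_le_rank[OF assms(1), of n b]
    by (simp add: distrib_left)
  also have "\<dots> \<le> real (rank M)"
    using assms(2) by (simp add: a_def b_def norm_complex_vec_sq[symmetric] power_le_one mult_left_le)
  finally show "(norm (cmat (matpow M n) *v u))\<^sup>2 - (norm (cmat (matpow M (Suc n)) *v u))\<^sup>2
      \<le> real (rank M) / real n"
    using \<open>n \<ge> 1\<close> by (simp add: field_simps)
  show "real (rank M) / real n \<le> real CARD('d) / real n"
    using rank_bound[of M] by (intro divide_right_mono) simp_all
qed

end
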